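(* The set of points of exact period $3$ under $G$ lies on the curve $1+v+uv=0$ (i.e. $v=-1/(1+u)$), and the Zariski closure in $\mathbb{C}^2$ of this set is this curve (the equation of period three orbits on the $(u,v)$-plane is $v=-1/(1+u)$).
   Context: Let \[ G(u,v)=\left(\frac{-u+v+uv}{u},\ \frac{u^{2}-u+v-u^{2}v-uv+uv^{2}+v^{2}}{u}\right), \] defined for $(u,v)\in\mathbb{C}^2$ with $u\neq 0$. A point $(u,v)$ has exact period $n$ under $G$ if the iterates $G^k(u,v)$, $0\le k\le n-1$, all have nonzero first coordinate, $G^n(u,v)=(u,v)$, and $G^k(u,v)\neq(u,v)$ for $0<k<n$. *)

theory Defs
  imports Complex_Main "HOL-Computational_Algebra.Polynomial"
begin

definition G :: "complex \<times> complex \<Rightarrow> complex \<times> complex" where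
  "G z = (let u = fst z; v = snd z in
     ((- u + v + u * v) / u,
      (u^2 - u + v - u^2 * v - u * v + u * v^2 + v^2) / u))"

definition exact_period :: "nat \<Rightarrow> complex \<times> complex \<Rightarrow> bool" where
  "exact_period n z \<longleftrightarrow>
     (\<forall>k<n. fst ((G ^^ k) z) \<noteq> 0) \<and> (G ^^ n) z = z \<and>
     (\<forall>k. 0 < k \<and> k < n \<longrightarrow> (G ^^ k) z \<noteq> z)"

text \<open>Bivariate complex polynomials are represented as complex poly poly
  (outer variable v, inner variable u); evaluation at (u,v).\<close>
definition eval2 :: "complex poly poly \<Rightarrow> complex \<times> complex \<Rightarrow> complex" where
  "eval2 p z = poly (poly p [:snd z:]) (fst z)"

definition zariski_closure :: "(complex \<times> complex) set \<Rightarrow> (complex \<times> complex) set" where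
  "zariski_closure S = {z. \<forall>p. (\<forall>w\<in>S. eval2 p w = 0) \<longrightarrow> eval2 p z = 0}"

end

theory Submission imports Defs begin

text \<open>On the invariant line u = -1 the map G is an involution, so a 3-cycle avoids it.
  Away from u = -1 the relation u u' = -u + v + uv gives v = u(1+u')/(1+u), so an orbit
  is determined by its first coordinates; in terms of p = 1 + u, three consecutive values
  p, q, r satisfy p r + q (p^2 - p q - 2 p + q) = 0. For a 3-cycle this cyclic system forces
  either p = q = r (a fixed point) or 1 - q + p q = 0, which is the curve 1 + v + uv = 0.
  Conversely, on the curve G acts by u \<mapsto> -(1+u)/u, a Moebius map of order 3 whose only
  fixed points are the roots of u^2 + u + 1; so all but finitely many points of the curve
  have exact period 3. A polynomial f vanishing there gives the polynomial
  (1+u)^deg f * f(u, -1/(1+u)) with infinitely many roots, hence f vanishes on the whole curve.\<close>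

lemma exact_period_3_iff:
  "exact_period 3 z \<longleftrightarrow>
     fst z \<noteq> 0 \<and> fst (G z) \<noteq> 0 \<and> fst (G (G z)) \<noteq> 0 \<and>
     G (G (G z)) = z \<and> G z \<noteq> z \<and> G (G z) \<noteq> z"
proof -
  have lt3: "(\<forall>k<3. P k) \<longleftrightarrow> P 0 \<and> P 1 \<and> P 2" for P :: "nat \<Rightarrow> bool"
    by (auto simp: less_Suc_eq numeral_3_eq_3 numeral_2_eq_2)
  have between: "(\<forall>k. 0 < k \<and> k < 3 \<longrightarrow> P k) \<longleftrightarrow> P 1 \<and> P 2" for P :: "nat \<Rightarrow> bool"
    by (auto simp: less_Suc_eq numeral_3_eq_3 numeral_2_eq_2)
  show ?thesis
    unfolding exact_period_def lt3 between
    by (simp add: numeral_3_eq_3 numeral_2_eq_2)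
qed

lemma G_eqD:
  assumes "u \<noteq> 0" and "G (u, v) = (u', v')"
  shows "u * u' = - u + v + u * v"
    and "u * v' = u^2 - u + v - u^2 * v - u * v + u * v^2 + v^2"
  using assms by (auto simp: G_def Let_def field_simps)

lemma G_fst_minus_one: "G (-1, v) = (-1, -2 - v)"
  by (simp add: G_def Let_def algebra_simps power2_eq_square)

lemma G_orbit_fst_recurrence:
  fixes a b c x y :: complex
  assumes "a \<noteq> 0" "b \<noteq> 0" "1 + a \<noteq> 0"
    and step1: "G (a, x) = (b, y)" and step2: "fst (G (b, y)) = c"
  shows "(1+a)*(1+c) + (1+b)*((1+a)^2 - (1+a)*(1+b) - 2*(1+a) + (1+b)) = 0"
proof -
  obtain w where step2': "G (b, y) = (c, w)" using step2 by (cases "G (b, y)") auto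
  note r = G_eqD[OF \<open>a \<noteq> 0\<close> step1] G_eqD(1)[OF \<open>b \<noteq> 0\<close> step2']
  have "a*b*(1+a)*((1+a)*(1+c) + (1+b)*((1+a)^2 - (1+a)*(1+b) - 2*(1+a) + (1+b))) = 0"
    using r by algebra
  then show ?thesis using assms(1-3) by simp
qed

lemma cyclic_recurrence_solutions:
  fixes p q r :: complex
  assumes p0: "p \<noteq> 0" and q0: "q \<noteq> 0"
    and e1: "p*r + q*(p^2 - p*q - 2*p + q) = 0"
    and e2: "q*p + r*(q^2 - q*r - 2*q + r) = 0"
    and e3: "r*q + p*(r^2 - r*p - 2*r + p) = 0"
  shows "1 - q + p*q = 0 \<or> (p = q \<and> q = r)"
proof -
  let ?C = "1 - q + p*q" and ?D = "p - q"
  let ?S2 = "-(p^2*q) + p^2 + p*q^2 + p*q - q^2"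
  let ?S3 = "p^2*q + p^2 - p*q^2 - 3*p*q + q^2"
  \<comment> \<open>Eliminate r from e2 and e3 by means of e1.\<close>
  have "p^2 * (q*p + r*(q^2 - q*r - 2*q + r)) = (p*r + q*(p^2 - p*q - 2*p + q)) *
     (p^2*q^2 - p^2*q - p*q^3 - p*q*r + p*r + q^3 - q^2) + q * ?C * ?D * ?S2"
    by algebra
  then have S2: "q * ?C * ?D * ?S2 = 0" using e1 e2 by simp
  have "p^2 * (r*q + p*(r^2 - r*p - 2*r + p)) = (p*r + q*(p^2 - p*q - 2*p + q)) *
     (-(p^3*q) - p^3 + p^2*q^2 + 2*p^2*q + p^2*r - 2*p^2 - p*q^2 + p*q) + p * ?C * ?D * ?S3"
    by algebra
  then have S3: "p * ?C * ?D * ?S3 = 0" using e1 e3 by simp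
  consider "?C = 0" | "p = q" | "?C \<noteq> 0" "p \<noteq> q" by blast
  then show ?thesis
  proof cases
    case 2
    with e1 have "p * (r - p) = 0" by (simp add: algebra_simps power2_eq_square)
    with p0 2 show ?thesis by simp
  next
    case 3
    have "2 * p * (p - q) = ?S2 + ?S3" by algebra
    also have "\<dots> = 0" using S2 S3 p0 q0 3 by simp
    finally show ?thesis using p0 3 by simp
  qed simp
qed

lemma three_cycle_on_curve:
  fixes u0 v0 u1 v1 u2 v2 :: complex
  assumes g0: "G (u0, v0) = (u1, v1)" and g1: "G (u1, v1) = (u2, v2)"
    and g2: "G (u2, v2) = (u0, v0)"
    and nz: "u0 \<noteq> 0" "u1 \<noteq> 0" "u2 \<noteq> 0"
    and ne1: "(u1, v1) \<noteq> (u0, v0)" and ne2: "(u2, v2) \<noteq> (u0, v0)"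
  shows "1 + v0 + u0 * v0 = 0"
proof -
  have not_minus_one: "1 + u0 \<noteq> 0" "1 + u1 \<noteq> 0" "1 + u2 \<noteq> 0"
  proof -
    have u0: "u0 \<noteq> -1"
      using g0 g1 ne2 by (auto simp: G_fst_minus_one)
    moreover have u2: "u2 \<noteq> -1" using g2 u0 by (auto simp: G_fst_minus_one)
    moreover have "u1 \<noteq> -1" using g1 u2 by (auto simp: G_fst_minus_one)
    ultimately show "1 + u0 \<noteq> 0" "1 + u1 \<noteq> 0" "1 + u2 \<noteq> 0"
      by (auto simp: add_eq_0_iff)
  qed
  have rec:
    "(1+u0)*(1+u2) + (1+u1)*((1+u0)^2 - (1+u0)*(1+u1) - 2*(1+u0) + (1+u1)) = 0"
    "(1+u1)*(1+u0) + (1+u2)*((1+u1)^2 - (1+u1)*(1+u2) - 2*(1+u1) + (1+u2)) = 0"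
    "(1+u2)*(1+u1) + (1+u0)*((1+u2)^2 - (1+u2)*(1+u0) - 2*(1+u2) + (1+u0)) = 0"
    using G_orbit_fst_recurrence[OF nz(1,2) not_minus_one(1) g0] g1
      G_orbit_fst_recurrence[OF nz(2,3) not_minus_one(2) g1] g2
      G_orbit_fst_recurrence[OF nz(3,1) not_minus_one(3) g2] g0
    by auto
  have rel0: "u0 * u1 = - u0 + v0 + u0 * v0" and rel1: "u1 * u2 = - u1 + v1 + u1 * v1"
    using G_eqD(1)[OF nz(1) g0] G_eqD(1)[OF nz(2) g1] by auto
  from cyclic_recurrence_solutions[OF not_minus_one(1,2) rec]
  show ?thesis
  proof
    assume "1 - (1 + u1) + (1 + u0) * (1 + u1) = 0"
    moreover have "1 + v0 + u0*v0 = 1 - (1 + u1) + (1 + u0) * (1 + u1)"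
      using rel0 by algebra
    ultimately show ?thesis by simp
  next
    assume same: "1 + u0 = 1 + u1 \<and> 1 + u1 = 1 + u2"
    have "(v0 - u0) * (1 + u0) = 0" "(v1 - u1) * (1 + u1) = 0"
      using rel0 rel1 same by algebra+
    with not_minus_one same have "(u1, v1) = (u0, v0)" by simp
    with ne1 show ?thesis ..
  qed
qed

lemma exact_period_3_on_curve:
  assumes "exact_period 3 z"
  shows "1 + snd z + fst z * snd z = 0"
proof -
  obtain u0 v0 where z: "z = (u0, v0)" by (cases z)
  obtain u1 v1 where z1: "G z = (u1, v1)" by (cases "G z")
  obtain u2 v2 where z2: "G (G z) = (u2, v2)" by (cases "G (G z)")
  from assms[unfolded exact_period_3_iff] z z1 z2
  have "1 + v0 + u0 * v0 = 0" by (intro three_cycle_on_curve[of u0 v0 u1 v1 u2 v2]) auto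
  with z show ?thesis by simp
qed

definition curve_map :: "complex \<Rightarrow> complex" where
  "curve_map a = -(1+a)/a"

lemma one_plus_curve_map:
  assumes "a \<noteq> 0"
  shows "1 + curve_map a = -1/a"
  using assms by (simp add: curve_map_def field_simps)

lemma G_on_curve:
  fixes a :: complex
  assumes "a \<noteq> 0" "a \<noteq> -1"
  shows "G (a, -1/(1+a)) = (curve_map a, -1/(1 + curve_map a))"
proof -
  define w where "w = -1/(1+a)"
  have w: "w * (1 + a) = -1" using assms(2) by (simp add: w_def add_eq_0_iff)
  have fst: "-a + w + a*w = -(1+a)" using w by algebra
  have snd: "a^2 - a + w - a^2*w - a*w + a*w^2 + w^2 = a * a" using w by algebra
  have "G (a, w) = (curve_map a, a)"
    unfolding G_def Let_def fst_conv snd_conv fst snd using assms(1) by (simp add: curve_map_def)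
  then show ?thesis using assms(1) by (simp add: one_plus_curve_map w_def)
qed

lemma curve_map_nonzero:
  assumes "a \<noteq> 0" "a \<noteq> -1"
  shows "curve_map a \<noteq> 0" "curve_map a \<noteq> -1"
  using assms one_plus_curve_map[OF assms(1)] by (auto simp: curve_map_def add_eq_0_iff)

lemma curve_map_curve_map:
  assumes "a \<noteq> 0" "a \<noteq> -1"
  shows "curve_map (curve_map a) = -1/(1+a)"
  using assms by (simp add: curve_map_def field_simps add_eq_0_iff)

lemma curve_map_order_3:
  assumes "a \<noteq> 0" "a \<noteq> -1"
  shows "curve_map (curve_map (curve_map a)) = a"
  using assms by (simp add: curve_map_curve_map curve_map_def field_simps add_eq_0_iff)

lemma curve_map_fixed_iff:
  assumes "a \<noteq> 0"
  shows "curve_map a = a \<longleftrightarrow> a^2 + a + 1 = 0"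
  using assms by (auto simp: curve_map_def field_simps power2_eq_square; algebra)

lemma curve_map_curve_map_fixed_iff:
  assumes "a \<noteq> 0" "a \<noteq> -1"
  shows "curve_map (curve_map a) = a \<longleftrightarrow> a^2 + a + 1 = 0"
  using assms by (auto simp: curve_map_curve_map field_simps power2_eq_square add_eq_0_iff; algebra)

lemma exact_period_3_curve_point:
  fixes a :: complex
  assumes "a \<noteq> 0" "a \<noteq> -1" "a^2 + a + 1 \<noteq> 0"
  shows "exact_period 3 (a, -1/(1+a))"
proof -
  let ?b = "curve_map a"
  let ?c = "curve_map ?b"
  have b: "?b \<noteq> 0" "?b \<noteq> -1" using curve_map_nonzero assms by blast+
  have c: "?c \<noteq> 0" "?c \<noteq> -1" using curve_map_nonzero b by blast+
  note orbit = G_on_curve[OF assms(1,2)] G_on_curve[OF b] G_on_curve[OF c]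
  have "?b \<noteq> a" "?c \<noteq> a"
    using assms curve_map_fixed_iff curve_map_curve_map_fixed_iff by blast+
  then show ?thesis
    unfolding exact_period_3_iff orbit curve_map_order_3[OF assms(1,2)]
    using assms b c by simp
qed

lemma poly_curve_cleared:
  fixes f :: "complex poly poly" and x :: complex
  assumes "x \<noteq> -1"
  shows "poly (\<Sum>k\<le>degree f. coeff f k * smult ((-1)^k) ([:1,1:]^(degree f - k))) x
      = (1+x)^degree f * eval2 f (x, -1/(1+x))"
proof -
  let ?n = "degree f"
  define w where "w = -1/(1+x)"
  have w: "(1+x) * w = -1" using assms by (simp add: w_def add_eq_0_iff)
  have power: "(1+x)^?n * w^k = (-1)^k * (1+x)^(?n-k)" if "k \<le> ?n" for k
  proof -
    have "(1+x)^?n = (1+x)^k * (1+x)^(?n-k)" using that by (simp flip: power_add)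
    then have "(1+x)^?n * w^k = ((1+x) * w)^k * (1+x)^(?n-k)"
      unfolding power_mult_distrib by (simp only: mult_ac)
    then show ?thesis unfolding w .
  qed
  have "eval2 f (x, w) = (\<Sum>k\<le>?n. poly (coeff f k) x * w^k)"
    unfolding eval2_def poly_altdef[of f] by (simp add: poly_sum poly_power)
  then have "(1+x)^?n * eval2 f (x, w) = (\<Sum>k\<le>?n. poly (coeff f k) x * ((1+x)^?n * w^k))"
    by (simp add: sum_distrib_left algebra_simps)
  also have "\<dots> = (\<Sum>k\<le>?n. poly (coeff f k) x * ((-1)^k * (1+x)^(?n-k)))"
    by (rule sum.cong) (simp_all add: power)
  also have "\<dots> = poly (\<Sum>k\<le>?n. coeff f k * smult ((-1)^k) ([:1,1:]^(?n-k))) x"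
    by (simp add: poly_sum poly_power algebra_simps)
  finally show ?thesis unfolding w_def ..
qed

lemma eval2_curve_vanishes:
  fixes f :: "complex poly poly"
  assumes "finite F"
    and vanish: "\<And>x. x \<noteq> -1 \<Longrightarrow> x \<notin> F \<Longrightarrow> eval2 f (x, -1/(1+x)) = 0"
    and a: "a \<noteq> -1"
  shows "eval2 f (a, -1/(1+a)) = 0"
proof -
  define Q where "Q = (\<Sum>k\<le>degree f. coeff f k * smult ((-1)^k) ([:1,1:]^(degree f - k)))"
  have "UNIV - insert (-1) F \<subseteq> {x. poly Q x = 0}"
    using poly_curve_cleared vanish by (auto simp: Q_def)
  moreover have "infinite (UNIV - insert (-1) F :: complex set)"
    using \<open>finite F\<close> by (simp add: infinite_UNIV_char_0 Diff_infinite_finite)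
  ultimately have "Q = 0" using poly_roots_finite finite_subset by blast
  then have "(1+a)^degree f * eval2 f (a, -1/(1+a)) = 0"
    using poly_curve_cleared[OF a, of f] by (simp add: Q_def)
  then show ?thesis using a by (simp add: add_eq_0_iff)
qed

lemma curve_eq_graph:
  fixes u v :: complex
  shows "1 + v + u * v = 0 \<longleftrightarrow> u \<noteq> -1 \<and> v = -1/(1+u)"
proof
  assume curve: "1 + v + u * v = 0"
  then have "u \<noteq> -1" by auto
  moreover have "v * (1 + u) = -1" using curve by algebra
  ultimately show "u \<noteq> -1 \<and> v = -1/(1+u)" by (simp add: field_simps add_eq_0_iff)
next
  assume "u \<noteq> -1 \<and> v = -1/(1+u)"
  then show "1 + v + u * v = 0" by (simp add: field_simps add_eq_0_iff)
qed

lemma zariski_closure_subset_zero_set: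
  assumes "\<forall>w\<in>S. eval2 p w = 0"
  shows "zariski_closure S \<subseteq> {z. eval2 p z = 0}"
  using assms by (auto simp: zariski_closure_def)

lemma curve_subset_zariski_closure_period_3:
  "{(u, v). 1 + v + u * v = 0} \<subseteq> zariski_closure {z. exact_period 3 z}"
proof (clarify, unfold curve_eq_graph zariski_closure_def, intro CollectI allI impI)
  fix u v :: complex and f
  assume uv: "u \<noteq> -1 \<and> v = -1/(1+u)" and f: "\<forall>w\<in>{z. exact_period 3 z}. eval2 f w = 0"
  have "finite (insert 0 {x :: complex. x^2 + x + 1 = 0})"
    using poly_roots_finite[of "[:1,1,1:]"] by (simp add: algebra_simps power2_eq_square)
  then have "eval2 f (u, -1/(1+u)) = 0"
    by (rule eval2_curve_vanishes) (use uv f exact_period_3_curve_point in auto)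
  then show "eval2 f (u, v) = 0" using uv by simp
qed

theorem mainTheorem5:
  shows "{z. exact_period 3 z} \<subseteq> {(u, v). 1 + v + u * v = 0}
     \<and> zariski_closure {z. exact_period 3 z} = {(u, v). 1 + v + u * v = 0}"
proof -
  let ?curve = "{(u, v). 1 + v + u * v = (0 :: complex)}"
  have curve_poly: "eval2 [: [:1:], [:1,1:] :] z = 1 + snd z + fst z * snd z" for z
    by (simp add: eval2_def algebra_simps)
  have sub: "{z. exact_period 3 z} \<subseteq> ?curve"
  proof clarify
    fix u v assume "exact_period 3 (u, v)"
    from exact_period_3_on_curve[OF this] show "1 + v + u * v = 0" by simp
  qed
  have "zariski_closure {z. exact_period 3 z} \<subseteq> {z. eval2 [: [:1:], [:1,1:] :] z = 0}"
    by (rule zariski_closure_subset_zero_set) (simp add: curve_poly exact_period_3_on_curve)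
  also have "\<dots> = ?curve" by (auto simp: curve_poly)
  finally show ?thesis using sub curve_subset_zariski_closure_period_3 by (intro conjI equalityI)
qed

end
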